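(* Let $\ell\ge 2$ and let $G$ be a pendant graph with $m$ edges and $n$ vertices. Then $\overline{G}$ is $N$-AW if and only if $\gcd(2(n-m)-1,\ell)=1$. Equivalently, if $G$ is a graph of even order $n$ and size $\binom{n}{2}-\left(\frac{n}{2}+k\right)$ such that $\overline{G}$ is a pendant graph, then $G$ is $N$-AW if and only if $\gcd(n-2k-1,\ell)=1$.
   Context: All graphs are finite and simple; $\overline{G}$ is the complement. For a graph $H$, $H\odot K_1$ is obtained from $H$ by adding, for each vertex $u$ of $H$, a new vertex adjacent only to $u$; a pendant graph is a graph of this form. Labels lie in $\mathbb{Z}_\ell$. In the neighborhood Lights Out game, toggling a vertex $w$ adds $1$ (mod $\ell$) to the label of each vertex of the closed neighborhood $N[w]$; the game is won when all labels are $0$; a graph is $N$-AW if every initial labeling can be won. *)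

theory Defs
  imports Main
begin

definition is_graph :: "'a set \<Rightarrow> ('a \<Rightarrow> 'a \<Rightarrow> bool) \<Rightarrow> bool" where
  "is_graph V E \<longleftrightarrow> finite V \<and> (\<forall>u v. E u v \<longrightarrow> u \<in> V \<and> v \<in> V)
     \<and> (\<forall>u v. E u v \<longrightarrow> E v u) \<and> (\<forall>u. \<not> E u u)"

definition num_edges :: "'a set \<Rightarrow> ('a \<Rightarrow> 'a \<Rightarrow> bool) \<Rightarrow> nat" where
  "num_edges V E = card {{u, v} | u v. u \<in> V \<and> v \<in> V \<and> E u v}"

definition compl_graph :: "'a set \<Rightarrow> ('a \<Rightarrow> 'a \<Rightarrow> bool) \<Rightarrow> ('a \<Rightarrow> 'a \<Rightarrow> bool)" where
  "compl_graph V E = (\<lambda>u v. u \<in> V \<and> v \<in> V \<and> u \<noteq> v \<and> \<not> E u v)"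

text \<open>G is (isomorphic to) H \<odot> K1: there is a core C (the copy of H) and a bijection p from C
  onto the remaining vertices such that every vertex outside C is adjacent exactly to its
  partner p^{-1}; edges inside C are those of H (arbitrary).\<close>
definition is_pendant :: "'a set \<Rightarrow> ('a \<Rightarrow> 'a \<Rightarrow> bool) \<Rightarrow> bool" where
  "is_pendant V E \<longleftrightarrow> (\<exists>C p. C \<subseteq> V \<and> bij_betw p C (V - C) \<and>
      (\<forall>u \<in> V - C. \<forall>v. E u v \<longleftrightarrow> (v \<in> C \<and> u = p v)))"

text \<open>Neighborhood Lights Out over Z_l: every initial labeling a can be brought to all zeros;
  t w is the number of times vertex w is toggled; toggling w adds 1 to each vertex of N[w].\<close>
definition N_AW :: "nat \<Rightarrow> 'a set \<Rightarrow> ('a \<Rightarrow> 'a \<Rightarrow> bool) \<Rightarrow> bool" where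
  "N_AW l V E \<longleftrightarrow> (\<forall>a :: 'a \<Rightarrow> int. \<exists>t :: 'a \<Rightarrow> nat. \<forall>v \<in> V.
      (a v + (\<Sum>w \<in> {w \<in> V. w = v \<or> E w v}. int (t w))) mod int l = 0)"

end

theory Submission
  imports Defs "HOL-Number_Theory.Cong"
begin

(* Let A be the adjacency matrix of G and J the all-ones matrix; toggling in the complement of G
   acts by J - A. For a pendant graph A is invertible over the integers: any vector of
   neighbourhood sums is attained, solving first at the pendant vertices, whose only neighbour
   is their partner in the core. The linear form L = 1^T A^-1 satisfies L 1 = 2(n - m) by the
   handshake lemma, so L((J - A) t) = (2(n - m) - 1) * sum t. Applying L to a winning toggle
   vector shows that L a + (2(n - m) - 1) T = 0 (mod l) is solvable for every labelling a, which
   forces 2(n - m) - 1 to be a unit mod l; conversely, t = A^-1 (a + T 1) leaves the constant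
   residue L a + (2(n - m) - 1) T at every vertex, and T can be chosen to make it vanish.
   The second statement is the first one applied to the complement. *)

lemma compl_graph_compl_graph:
  assumes "is_graph V E"
  shows "compl_graph V (compl_graph V E) = E"
  using assms unfolding is_graph_def compl_graph_def by (auto intro!: ext)

lemma is_graph_compl_graph:
  assumes "is_graph V E"
  shows "is_graph V (compl_graph V E)"
  using assms unfolding is_graph_def compl_graph_def by auto

lemma num_edges_add_compl_graph:
  assumes "is_graph V E"
  shows "num_edges V E + num_edges V (compl_graph V E) = card V choose 2"
proof -
  define E1 where "E1 = {{u, v} | u v. u \<in> V \<and> v \<in> V \<and> E u v}"
  define E2 where "E2 = {{u, v} | u v. u \<in> V \<and> v \<in> V \<and> compl_graph V E u v}"
  have fin: "finite V" and sym: "\<And>u v. E u v \<Longrightarrow> E v u" and irrefl: "\<And>u. \<not> E u u"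
    using assms unfolding is_graph_def by auto
  have "E1 \<union> E2 = {B. B \<subseteq> V \<and> card B = 2}"
  proof (intro set_eqI iffI)
    fix B assume "B \<in> E1 \<union> E2"
    then obtain u v where "B = {u, v}" "u \<in> V" "v \<in> V" "u \<noteq> v"
      using irrefl unfolding E1_def E2_def compl_graph_def by blast
    then show "B \<in> {B. B \<subseteq> V \<and> card B = 2}"
      by auto
  next
    fix B assume "B \<in> {B. B \<subseteq> V \<and> card B = 2}"
    then obtain u v where "B = {u, v}" "u \<noteq> v" "u \<in> V" "v \<in> V"
      by (auto simp: card_2_iff)
    then show "B \<in> E1 \<union> E2"
      unfolding E1_def E2_def compl_graph_def by blast
  qed
  moreover have "E1 \<inter> E2 = {}"
  proof (rule ccontr)
    assume "E1 \<inter> E2 \<noteq> {}"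
    then obtain u v x y where "{u, v} = {x, y}" "E u v" "\<not> E x y"
      unfolding E1_def E2_def compl_graph_def by blast
    then show False
      using sym by (auto simp: doubleton_eq_iff)
  qed
  moreover have "finite (E1 \<union> E2)"
    unfolding calculation(1) using fin by simp
  ultimately have "card E1 + card E2 = card {B. B \<subseteq> V \<and> card B = 2}"
    by (metis card_Un_disjoint finite_Un)
  then have "card E1 + card E2 = card V choose 2"
    using n_subsets[OF fin] by simp
  then show ?thesis
    unfolding num_edges_def E1_def E2_def .
qed

lemma degree_sum:
  assumes "is_graph V E"
  shows "(\<Sum>v\<in>V. card {w\<in>V. E w v}) = 2 * num_edges V E"
proof -
  have fin: "finite V" and sym: "\<And>u v. E u v \<Longrightarrow> E v u" and irrefl: "\<And>u. \<not> E u u"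
    using assms unfolding is_graph_def by auto
  define arcs where "arcs = Sigma V (\<lambda>v. {w\<in>V. E w v})"
  define edges where "edges = {{u, v} | u v. u \<in> V \<and> v \<in> V \<and> E u v}"
  define ends :: "'a \<times> 'a \<Rightarrow> 'a set" where "ends = (\<lambda>(v, w). {v, w})"
  have "edges \<subseteq> Pow V"
    unfolding edges_def by blast
  then have "finite arcs" "finite edges"
    using fin finite_subset unfolding arcs_def by auto
  moreover have "ends ` arcs \<subseteq> edges"
  proof
    fix e assume "e \<in> ends ` arcs"
    then obtain v w where e: "e = {v, w}" "v \<in> V" "w \<in> V" "E w v"
      unfolding arcs_def ends_def by auto
    then have "e = {w, v}"
      by (simp add: insert_commute)
    with e show "e \<in> edges"
      unfolding edges_def by blast
  qed
  ultimately have "card arcs = (\<Sum>e\<in>edges. card {x\<in>arcs. ends x = e})"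
    using sum.group[of arcs edges ends "\<lambda>_. 1 :: nat"] by simp
  also have "\<dots> = (\<Sum>e\<in>edges. 2)"
  proof (rule sum.cong)
    fix e assume "e \<in> edges"
    then obtain u v where e: "e = {u, v}" "u \<in> V" "v \<in> V" "E u v"
      unfolding edges_def by blast
    have "{x\<in>arcs. ends x = e} = {(u, v), (v, u)}"
      using e sym unfolding arcs_def ends_def by (auto simp: doubleton_eq_iff)
    moreover have "u \<noteq> v"
      using e irrefl by auto
    ultimately show "card {x\<in>arcs. ends x = e} = 2"
      by simp
  qed simp
  finally have "card arcs = 2 * card edges"
    by simp
  moreover have "card arcs = (\<Sum>v\<in>V. card {w\<in>V. E w v})"
    using fin unfolding arcs_def by (simp add: card_SigmaI)
  ultimately show ?thesis
    unfolding num_edges_def edges_def by simp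
qed

definition nbr_sum :: "'a set \<Rightarrow> ('a \<Rightarrow> 'a \<Rightarrow> bool) \<Rightarrow> ('a \<Rightarrow> int) \<Rightarrow> 'a \<Rightarrow> int" where
  "nbr_sum V E t v = (\<Sum>w\<in>{w\<in>V. E w v}. t w)"

definition closed_nbr_sum :: "'a set \<Rightarrow> ('a \<Rightarrow> 'a \<Rightarrow> bool) \<Rightarrow> ('a \<Rightarrow> int) \<Rightarrow> 'a \<Rightarrow> int" where
  "closed_nbr_sum V E t v = (\<Sum>w\<in>{w\<in>V. w = v \<or> E w v}. t w)"

lemma N_AW_iff_int_toggles:
  assumes "l > 0"
  shows "N_AW l V E \<longleftrightarrow> (\<forall>a. \<exists>t. \<forall>v\<in>V. int l dvd a v + closed_nbr_sum V E t v)"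
proof
  assume "N_AW l V E"
  show "\<forall>a. \<exists>t. \<forall>v\<in>V. int l dvd a v + closed_nbr_sum V E t v"
  proof
    fix a
    obtain t :: "'a \<Rightarrow> nat" where
      "\<forall>v\<in>V. (a v + (\<Sum>w\<in>{w\<in>V. w = v \<or> E w v}. int (t w))) mod int l = 0"
      using \<open>N_AW l V E\<close> unfolding N_AW_def by blast
    then have "\<forall>v\<in>V. int l dvd a v + closed_nbr_sum V E (\<lambda>w. int (t w)) v"
      unfolding closed_nbr_sum_def by (simp add: dvd_eq_mod_eq_0)
    then show "\<exists>t. \<forall>v\<in>V. int l dvd a v + closed_nbr_sum V E t v"
      by blast
  qed
next
  assume solvable: "\<forall>a. \<exists>t. \<forall>v\<in>V. int l dvd a v + closed_nbr_sum V E t v"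
  show "N_AW l V E"
    unfolding N_AW_def
  proof
    fix a
    obtain t where t: "\<forall>v\<in>V. int l dvd a v + closed_nbr_sum V E t v"
      using solvable by blast
    have reduced: "(a v + (\<Sum>w\<in>N. int (nat (t w mod int l)))) mod int l = 0"
      if "int l dvd a v + (\<Sum>w\<in>N. t w)" for v N
    proof -
      have "(a v + (\<Sum>w\<in>N. int (nat (t w mod int l)))) mod int l
          = (a v + (\<Sum>w\<in>N. t w mod int l) mod int l) mod int l"
        using assms by (simp add: mod_add_right_eq)
      also have "\<dots> = (a v + (\<Sum>w\<in>N. t w)) mod int l"
        by (simp add: mod_sum_eq mod_add_right_eq)
      finally show ?thesis
        using that by simp
    qed
    show "\<exists>t. \<forall>v\<in>V. (a v + (\<Sum>w\<in>{w\<in>V. w = v \<or> E w v}. int (t w))) mod int l = 0"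
    proof (intro exI ballI)
      fix v assume "v \<in> V"
      then show "(a v + (\<Sum>w\<in>{w\<in>V. w = v \<or> E w v}. int (nat (t w mod int l)))) mod int l = 0"
        using t by (intro reduced) (simp add: closed_nbr_sum_def)
    qed
  qed
qed

lemma closed_nbr_sum_compl_graph:
  assumes "is_graph V E" and "v \<in> V"
  shows "closed_nbr_sum V (compl_graph V E) t v = sum t V - nbr_sum V E t v"
proof -
  have "{w\<in>V. w = v \<or> compl_graph V E w v} = V - {w\<in>V. E w v}"
    using assms unfolding is_graph_def compl_graph_def by auto
  then show ?thesis
    using assms unfolding closed_nbr_sum_def nbr_sum_def is_graph_def by (simp add: sum_diff)
qed

lemma coprime_iff_all_affine_solvable:
  fixes d l :: int
  shows "coprime d l \<longleftrightarrow> (\<forall>r. \<exists>x. l dvd r + d * x)"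
proof
  assume "coprime d l"
  then obtain y where y: "[d * y = 1] (mod l)"
    using coprime_iff_invertible_int by blast
  show "\<forall>r. \<exists>x. l dvd r + d * x"
  proof
    fix r
    have "[r * (d * y) = r * 1] (mod l)"
      using y by (rule cong_scalar_left)
    then have "l dvd r - d * (r * y)"
      by (simp add: cong_iff_dvd_diff dvd_diff_commute algebra_simps)
    then show "\<exists>x. l dvd r + d * x"
      by (metis add_uminus_conv_diff mult_minus_right)
  qed
next
  assume "\<forall>r. \<exists>x. l dvd r + d * x"
  then obtain x where "l dvd - 1 + d * x"
    by blast
  then have "[d * x = 1] (mod l)"
    by (simp add: cong_iff_dvd_diff)
  then show "coprime d l"
    using coprime_iff_invertible_int by blast
qed

locale pendant_graph =
  fixes V :: "'a set" and E :: "'a \<Rightarrow> 'a \<Rightarrow> bool" and C :: "'a set" and p :: "'a \<Rightarrow> 'a"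
  assumes graph: "is_graph V E"
    and core_subset: "C \<subseteq> V"
    and partner_bij: "bij_betw p C (V - C)"
    and pendant_adj: "\<And>u v. u \<in> V - C \<Longrightarrow> E u v \<longleftrightarrow> v \<in> C \<and> u = p v"
begin

definition core_nbrs :: "'a \<Rightarrow> 'a set" where
  "core_nbrs u = {w\<in>C. E w u}"

(* The form L = 1^T A^-1 of the proof idea, see pendant_form_nbr_sum. *)
definition pendant_form :: "('a \<Rightarrow> int) \<Rightarrow> int" where
  "pendant_form f = sum f V - (\<Sum>u\<in>C. \<Sum>w\<in>core_nbrs u. f (p w))"

lemma finite_V: "finite V"
  using graph unfolding is_graph_def by simp

lemma finite_C: "finite C"
  using finite_V core_subset by (rule finite_subset[rotated])

lemma finite_core_nbrs: "finite (core_nbrs u)"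
  unfolding core_nbrs_def using finite_C by simp

lemma partner_mem:
  assumes "u \<in> C"
  shows "p u \<in> V" and "p u \<notin> C"
  using assms partner_bij bij_betwE by blast+

lemma partner_adj_iff:
  assumes "u \<in> C"
  shows "E (p u) w \<longleftrightarrow> w = u"
proof -
  have "E (p u) w \<longleftrightarrow> w \<in> C \<and> p u = p w"
    using assms partner_mem pendant_adj by blast
  also have "\<dots> \<longleftrightarrow> w = u"
    using assms bij_betw_imp_inj_on[OF partner_bij] unfolding inj_on_def by blast
  finally show ?thesis .
qed

lemma nbrs_partner:
  assumes "u \<in> C"
  shows "{w\<in>V. E w (p u)} = {u}"
  using assms core_subset partner_adj_iff graph unfolding is_graph_def by blast

lemma nbrs_core:
  assumes "u \<in> C"
  shows "{w\<in>V. E w u} = insert (p u) (core_nbrs u)"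
proof -
  have "E w u \<longleftrightarrow> w = p u" if "w \<in> V - C" for w
    using that assms pendant_adj by blast
  then show ?thesis
    using assms partner_mem core_subset unfolding core_nbrs_def by blast
qed

lemma sum_split: "sum f V = (\<Sum>u\<in>C. f u + f (p u))"
proof -
  have "sum f V = sum f C + sum f (V - C)"
    using finite_V core_subset by (metis add.commute sum.subset_diff)
  also have "sum f (V - C) = (\<Sum>u\<in>C. f (p u))"
    by (rule sum.reindex_bij_betw[OF partner_bij, symmetric])
  finally show ?thesis
    by (simp add: sum.distrib)
qed

lemma card_V: "card V = 2 * card C"
  using sum_split[of "\<lambda>_. 1 :: nat"] by simp

lemma num_edges_eq: "2 * num_edges V E = 2 * card C + (\<Sum>u\<in>C. card (core_nbrs u))"
proof -
  have "2 * num_edges V E = (\<Sum>u\<in>C. card {w\<in>V. E w u} + card {w\<in>V. E w (p u)})"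
    using degree_sum[OF graph] sum_split[of "\<lambda>v. card {w\<in>V. E w v}"] by simp
  also have "\<dots> = (\<Sum>u\<in>C. 2 + card (core_nbrs u))"
    using nbrs_core nbrs_partner partner_mem finite_core_nbrs unfolding core_nbrs_def
    by (intro sum.cong) auto
  finally show ?thesis
    by (simp only: sum.distrib) simp
qed

lemma nbr_sum_partner: "u \<in> C \<Longrightarrow> nbr_sum V E t (p u) = t u"
  unfolding nbr_sum_def using nbrs_partner by simp

lemma nbr_sum_core: "u \<in> C \<Longrightarrow> nbr_sum V E t u = t (p u) + sum t (core_nbrs u)"
  unfolding nbr_sum_def using nbrs_core partner_mem finite_core_nbrs unfolding core_nbrs_def
  by simp

lemma pendant_form_cong:
  assumes "\<And>v. v \<in> V \<Longrightarrow> f v = g v"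
  shows "pendant_form f = pendant_form g"
proof -
  have "(\<Sum>w\<in>core_nbrs u. f (p w)) = (\<Sum>w\<in>core_nbrs u. g (p w))" for u
    using assms partner_mem unfolding core_nbrs_def by (intro sum.cong) auto
  then show ?thesis
    unfolding pendant_form_def using assms by simp
qed

lemma pendant_form_add: "pendant_form (\<lambda>v. f v + g v) = pendant_form f + pendant_form g"
  unfolding pendant_form_def by (simp add: sum.distrib)

lemma pendant_form_diff: "pendant_form (\<lambda>v. f v - g v) = pendant_form f - pendant_form g"
  unfolding pendant_form_def by (simp add: sum_subtractf)

lemma dvd_pendant_form:
  assumes "\<And>v. v \<in> V \<Longrightarrow> d dvd f v"
  shows "d dvd pendant_form f"
proof -
  have "d dvd f (p w)" if "w \<in> core_nbrs u" for u w
    using that assms partner_mem unfolding core_nbrs_def by simp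
  then show ?thesis
    unfolding pendant_form_def using assms by (simp add: dvd_sum dvd_diff)
qed

lemma pendant_form_indicator:
  assumes "u\<^sub>0 \<in> C"
  shows "pendant_form (\<lambda>v. if v = u\<^sub>0 then r else 0) = r"
proof -
  have "p w \<noteq> u\<^sub>0" if "w \<in> core_nbrs u" for u w
    using that assms partner_mem unfolding core_nbrs_def by blast
  then show ?thesis
    unfolding pendant_form_def using assms core_subset finite_V by auto
qed

lemma pendant_form_nbr_sum: "pendant_form (nbr_sum V E t) = sum t V"
proof -
  have "sum (nbr_sum V E t) V = (\<Sum>u\<in>C. t (p u) + sum t (core_nbrs u) + t u)"
    unfolding sum_split[of "nbr_sum V E t"] using nbr_sum_core nbr_sum_partner by simp
  moreover have "(\<Sum>w\<in>core_nbrs u. nbr_sum V E t (p w)) = sum t (core_nbrs u)" for u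
    using nbr_sum_partner unfolding core_nbrs_def by simp
  ultimately show ?thesis
    unfolding pendant_form_def sum_split[of t] by (simp add: sum.distrib algebra_simps)
qed

lemma pendant_form_const: "pendant_form (\<lambda>_. K) = 2 * (int (card V) - int (num_edges V E)) * K"
proof -
  have "2 * int (num_edges V E) = 2 * int (card C) + (\<Sum>u\<in>C. int (card (core_nbrs u)))"
    using arg_cong[OF num_edges_eq, of int] by simp
  then show ?thesis
    unfolding pendant_form_def by (simp add: card_V sum_distrib_left sum_distrib_right algebra_simps)
qed

lemma pendant_form_toggle_compl:
  "pendant_form (\<lambda>v. a v + closed_nbr_sum V (compl_graph V E) t v)
     = pendant_form a + (2 * (int (card V) - int (num_edges V E)) - 1) * sum t V"
proof -
  have "pendant_form (\<lambda>v. a v + closed_nbr_sum V (compl_graph V E) t v)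
      = pendant_form (\<lambda>v. a v + (sum t V - nbr_sum V E t v))"
    using closed_nbr_sum_compl_graph[OF graph] by (intro pendant_form_cong) simp
  also have "\<dots> = pendant_form a + pendant_form (\<lambda>_. sum t V) - pendant_form (nbr_sum V E t)"
    by (simp add: pendant_form_add pendant_form_diff)
  finally show ?thesis
    by (simp add: pendant_form_const pendant_form_nbr_sum algebra_simps)
qed

lemma partner_cases:
  assumes "v \<in> V"
  obtains "v \<in> C" | u where "u \<in> C" and "v = p u"
  using assms bij_betw_imp_surj_on[OF partner_bij] by blast

lemma nbr_sum_surj: "\<exists>t. \<forall>v\<in>V. nbr_sum V E t v = b v"
proof -
  define q where "q = inv_into C p"
  define t where "t v = (if v \<in> C then b (p v) else b (q v) - (\<Sum>w\<in>core_nbrs (q v). b (p w)))" for v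
  have q_partner: "q (p u) = u" if "u \<in> C" for u
    unfolding q_def using that bij_betw_imp_inj_on[OF partner_bij] by simp
  have "nbr_sum V E t v = b v" if "v \<in> V" for v
    using that
  proof (cases rule: partner_cases)
    case 1
    have "sum t (core_nbrs v) = (\<Sum>w\<in>core_nbrs v. b (p w))"
      unfolding t_def core_nbrs_def by simp
    then show ?thesis
      using 1 nbr_sum_core partner_mem q_partner unfolding t_def by simp
  next
    case (2 u)
    then show ?thesis
      using nbr_sum_partner unfolding t_def by simp
  qed
  then show ?thesis
    by blast
qed

lemma coprime_if_N_AW_compl:
  assumes "l > 0" and "N_AW l V (compl_graph V E)"
  shows "coprime (2 * (int (card V) - int (num_edges V E)) - 1) (int l)"
    (is "coprime ?D _")
proof (cases "C = {}")
  case True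
  then have "?D = -1"
    using card_V num_edges_eq by simp
  then show ?thesis
    by simp
next
  case False
  then obtain u\<^sub>0 where u\<^sub>0: "u\<^sub>0 \<in> C"
    by blast
  have solvable: "\<forall>a. \<exists>t. \<forall>v\<in>V. int l dvd a v + closed_nbr_sum V (compl_graph V E) t v"
    using assms N_AW_iff_int_toggles by blast
  have "\<exists>x. int l dvd r + ?D * x" for r
  proof -
    define a where "a v = (if v = u\<^sub>0 then r else 0)" for v
    obtain t where "\<forall>v\<in>V. int l dvd a v + closed_nbr_sum V (compl_graph V E) t v"
      using solvable by blast
    then have "int l dvd pendant_form (\<lambda>v. a v + closed_nbr_sum V (compl_graph V E) t v)"
      by (intro dvd_pendant_form) blast
    then show ?thesis
      unfolding pendant_form_toggle_compl a_def pendant_form_indicator[OF u\<^sub>0] by blast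
  qed
  then show ?thesis
    using coprime_iff_all_affine_solvable by blast
qed

lemma N_AW_compl_if_coprime:
  assumes "l > 0" and "coprime (2 * (int (card V) - int (num_edges V E)) - 1) (int l)"
    (is "coprime ?D _")
  shows "N_AW l V (compl_graph V E)"
proof -
  have "\<exists>t. \<forall>v\<in>V. int l dvd a v + closed_nbr_sum V (compl_graph V E) t v" for a
  proof -
    obtain T\<^sub>0 where T\<^sub>0: "int l dvd pendant_form a + ?D * T\<^sub>0"
      using assms(2) coprime_iff_all_affine_solvable by blast
    obtain t where t: "\<forall>v\<in>V. nbr_sum V E t v = a v + T\<^sub>0"
      using nbr_sum_surj[of "\<lambda>v. a v + T\<^sub>0"] by blast
    have "sum t V = pendant_form (nbr_sum V E t)"
      by (simp add: pendant_form_nbr_sum)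
    also have "\<dots> = pendant_form (\<lambda>v. a v + T\<^sub>0)"
      using t by (intro pendant_form_cong) simp
    also have "\<dots> = pendant_form a + (?D + 1) * T\<^sub>0"
      by (simp add: pendant_form_add pendant_form_const)
    finally have "a v + closed_nbr_sum V (compl_graph V E) t v = pendant_form a + ?D * T\<^sub>0"
      if "v \<in> V" for v
      using t closed_nbr_sum_compl_graph[OF graph that, of t] that by (simp add: algebra_simps)
    then show ?thesis
      using T\<^sub>0 by (intro exI[of _ t]) simp
  qed
  then show ?thesis
    using N_AW_iff_int_toggles[OF assms(1)] by blast
qed

end

lemma N_AW_compl_pendant_iff:
  assumes "is_graph V E" and "is_pendant V E" and "l > 0"
  shows "N_AW l V (compl_graph V E)
    \<longleftrightarrow> coprime (2 * (int (card V) - int (num_edges V E)) - 1) (int l)"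
proof -
  obtain C p where "C \<subseteq> V" "bij_betw p C (V - C)" "\<forall>u\<in>V - C. \<forall>v. E u v \<longleftrightarrow> v \<in> C \<and> u = p v"
    using assms(2) unfolding is_pendant_def by blast
  then interpret pendant_graph V E C p
    using assms(1) by unfold_locales auto
  show ?thesis
    using coprime_if_N_AW_compl[OF assms(3)] N_AW_compl_if_coprime[OF assms(3)] by blast
qed

theorem lemma3p10:
  fixes V :: "'a set" and E :: "'a \<Rightarrow> 'a \<Rightarrow> bool" and l :: nat
  assumes "is_graph V E" and "l \<ge> 2"
  shows "(is_pendant V E \<longrightarrow>
            (N_AW l V (compl_graph V E) \<longleftrightarrow>
             gcd (2 * (int (card V) - int (num_edges V E)) - 1) (int l) = 1))
       \<and> (\<forall>k :: int. even (card V)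
            \<and> int (num_edges V E) = int (card V choose 2) - (int (card V) div 2 + k)
            \<and> is_pendant V (compl_graph V E) \<longrightarrow>
            (N_AW l V E \<longleftrightarrow> gcd (int (card V) - 2 * k - 1) (int l) = 1))"
proof (intro conjI allI impI)
  have l: "l > 0"
    using assms(2) by simp
  show "N_AW l V (compl_graph V E) \<longleftrightarrow>
      gcd (2 * (int (card V) - int (num_edges V E)) - 1) (int l) = 1"
    if "is_pendant V E"
    using N_AW_compl_pendant_iff[OF assms(1) that l] by (simp add: coprime_iff_gcd_eq_1)
  fix k :: int
  assume h: "even (card V)
    \<and> int (num_edges V E) = int (card V choose 2) - (int (card V) div 2 + k)
    \<and> is_pendant V (compl_graph V E)"
  obtain c where c: "card V = 2 * c"
    using h by blast
  have "int (num_edges V (compl_graph V E)) = int c + k"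
    using h c num_edges_add_compl_graph[OF assms(1)] by simp
  then have D_eq: "2 * (int (card V) - int (num_edges V (compl_graph V E))) - 1
      = int (card V) - 2 * k - 1"
    using c by simp
  have "N_AW l V (compl_graph V (compl_graph V E))
    \<longleftrightarrow> coprime (2 * (int (card V) - int (num_edges V (compl_graph V E))) - 1) (int l)"
    using N_AW_compl_pendant_iff[OF is_graph_compl_graph[OF assms(1)] _ l] h by blast
  then show "N_AW l V E \<longleftrightarrow> gcd (int (card V) - 2 * k - 1) (int l) = 1"
    unfolding compl_graph_compl_graph[OF assms(1)] D_eq coprime_iff_gcd_eq_1 .
qed

end
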